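(* Let $x\in\mathbb{R}^n$. Then: (a) $T_L\subseteq T_z$; (b) $P_{T_L^\perp}LP_{T_x}=0$, $P_{T_L}LP_{T_x^\perp}=0$, and $P_{T_L^\perp}L=LP_{T_x^\perp}$; (c) for all $x'\in\mathbb{R}^n$, $P_{T_z}LP_{T_x}x'=LP_{T_x}x'$, and $P_{T_z^\perp}LP_{T_x}=0$; (d) for all $u\in\mathbb{R}^p$, $P_{T_x}L^\top P_{T_L}u=P_{T_x}L^\top u$ and $P_{T_x}L^\top P_{T_z}u=P_{T_x}L^\top u$; (e) $L^\top P_{T_z}L$ is diagonal with $(L^\top P_{T_z}L)_{i,i}=\sum_{t\in\mathcal{I}_x,\ i\in G_t}w_t^2$ for $i=1,\dots,n$.
   Context: Let $n,N\in\mathbb{N}$, let $G_1,\dots,G_N\subseteq\{1,\dots,n\}$ be nonempty groups, possibly overlapping, with $\bigcup_iG_i=\{1,\dots,n\}$, and weights $w_i>0$. $x_G$ is the subvector of $x$ indexed by $G$ (increasing order). Let $p=\sum_i|G_i|$, partition $\{1,\dots,p\}$ into consecutive blocks $J_i=\{\sum_{j<i}|G_j|+1,\dots,\sum_{j\le i}|G_j|\}$, and define $L\in\mathbb{R}^{p\times n}$ by $(Lx)_{J_i}=w_ix_{G_i}$. For $x\in\mathbb{R}^n$: $\mathcal{I}_x=\{t:x_{G_t}\ne0\}$; $\mathcal{E}_x=\{1,\dots,n\}\setminus\bigcup_{t\notin\mathcal{I}_x}G_t$, $T_x=\{x'\in\mathbb{R}^n:\mathrm{supp}(x')\subseteq\mathcal{E}_x\}$;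 $\mathcal{E}_z=\bigcup_{t\in\mathcal{I}_x}J_t$, $T_z=\{z'\in\mathbb{R}^p:\mathrm{supp}(z')\subseteq\mathcal{E}_z\}$; $\mathcal{E}_L=\mathrm{supp}(LP_{T_x}\mathbf{1}_n)\subseteq\{1,\dots,p\}$ (with $\mathbf{1}_n$ the all-ones vector), $T_L=\{z'\in\mathbb{R}^p:\mathrm{supp}(z')\subseteq\mathcal{E}_L\}$. $P_T$ denotes the orthogonal (coordinate) projection onto the coordinate subspace $T$ and $T^\perp$ its orthogonal complement. *)

theory Defs
  imports "Jordan_Normal_Form.Matrix"
begin

text \<open>Conventions: 0-based indexing throughout. Coordinates are 0..<n, groups are
  indexed by 0..<N, rows of L are 0..<p. Vectors/matrices are JNF vec/mat.\<close>

definition blk_off :: "(nat \<Rightarrow> nat set) \<Rightarrow> nat \<Rightarrow> nat" where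
  "blk_off G t = (\<Sum>j<t. card (G j))"

definition dimp :: "nat \<Rightarrow> (nat \<Rightarrow> nat set) \<Rightarrow> nat" where
  "dimp N G = blk_off G N"

definition blkJ :: "(nat \<Rightarrow> nat set) \<Rightarrow> nat \<Rightarrow> nat set" where
  "blkJ G t = {blk_off G t ..< blk_off G t + card (G t)}"

(* the matrix L : (L x)_{J_t} = w_t x_{G_t}, with G_t listed in increasing order;
   row blk_off t + k corresponds to the k-th smallest element of G_t *)
definition Lmat :: "nat \<Rightarrow> nat \<Rightarrow> (nat \<Rightarrow> nat set) \<Rightarrow> (nat \<Rightarrow> real) \<Rightarrow> real mat" where
  "Lmat n N G w = mat (dimp N G) n (\<lambda>(r, c).
     \<Sum>t<N. if r \<in> blkJ G t \<and> c = sorted_list_of_set (G t) ! (r - blk_off G t)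
             then w t else 0)"

definition actI :: "nat \<Rightarrow> (nat \<Rightarrow> nat set) \<Rightarrow> real vec \<Rightarrow> nat set" where
  "actI N G x = {t. t < N \<and> (\<exists>i\<in>G t. x $ i \<noteq> 0)}"

definition Ex_set :: "nat \<Rightarrow> nat \<Rightarrow> (nat \<Rightarrow> nat set) \<Rightarrow> real vec \<Rightarrow> nat set" where
  "Ex_set n N G x = {..<n} - (\<Union>t\<in>{t. t < N \<and> t \<notin> actI N G x}. G t)"

definition Ez :: "nat \<Rightarrow> (nat \<Rightarrow> nat set) \<Rightarrow> real vec \<Rightarrow> nat set" where
  "Ez N G x = (\<Union>t\<in>actI N G x. blkJ G t)"

(* orthogonal coordinate projection onto T = {v \<in> R^d. supp v \<subseteq> E} *)
definition cproj :: "nat \<Rightarrow> nat set \<Rightarrow> real mat" where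
  "cproj d E = mat d d (\<lambda>(i, j). if i = j \<and> i \<in> E then 1 else 0)"

definition csub :: "nat \<Rightarrow> nat set \<Rightarrow> real vec set" where
  "csub d E = {v \<in> carrier_vec d. \<forall>i<d. i \<notin> E \<longrightarrow> v $ i = 0}"

definition ones_vec :: "nat \<Rightarrow> real vec" where
  "ones_vec d = vec d (\<lambda>_. 1)"

definition supp_vec :: "real vec \<Rightarrow> nat set" where
  "supp_vec v = {i. i < dim_vec v \<and> v $ i \<noteq> 0}"

definition EL :: "nat \<Rightarrow> nat \<Rightarrow> (nat \<Rightarrow> nat set) \<Rightarrow> (nat \<Rightarrow> real) \<Rightarrow> real vec \<Rightarrow> nat set" where
  "EL n N G w x = supp_vec ((Lmat n N G w * cproj n (Ex_set n N G x)) *\<^sub>v ones_vec n)"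

end

theory Submission
  imports Defs
begin

text \<open>Each row \<open>r \<in> J\<^sub>t\<close> of \<open>L\<close> has a single nonzero entry \<open>w\<^sub>t\<close>, in the column of the element of
  \<open>G\<^sub>t\<close> that \<open>r\<close> addresses. For such a matrix and coordinate projections everything is
  read off entrywise: \<open>E\<^sub>L\<close> is the set of rows whose column lies in \<open>E\<^sub>x\<close>, so it is
  contained in the blocks of active groups, i.e. in \<open>E\<^sub>z\<close>; and \<open>L\<^sup>T P L\<close> is diagonal with
  \<open>(i, i)\<close>-entry the sum of the squared row coefficients over the rows in the range of \<open>P\<close>
  that read column \<open>i\<close>. For \<open>P = P\<^sub>T\<^sub>z\<close> these rows correspond bijectively to the active
  groups containing \<open>i\<close>, one row in each.\<close>

lemma dim_cproj [simp]: "dim_row (cproj d E) = d" "dim_col (cproj d E) = d"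
  by (simp_all add: cproj_def)

lemma index_cproj_mult:
  assumes "dim_row A = d" "i < d" "j < dim_col A"
  shows "(cproj d E * A) $$ (i, j) = (if i \<in> E then A $$ (i, j) else 0)"
  using assms
  by (cases "i \<in> E")
    (simp_all add: cproj_def scalar_prod_def if_distrib[of "\<lambda>z. z * _"] eq_commute[of i]
      cong: if_cong conj_cong)

lemma index_mult_cproj:
  assumes "dim_col A = d" "i < dim_row A" "j < d"
  shows "(A * cproj d E) $$ (i, j) = (if j \<in> E then A $$ (i, j) else 0)"
  using assms
  by (cases "j \<in> E")
    (simp_all add: cproj_def scalar_prod_def if_distrib[of "\<lambda>z. _ * z"] cong: if_cong conj_cong)

locale monomial_rows =
  fixes A :: "real mat" and p n :: nat and sel :: "nat \<Rightarrow> nat" and coef :: "nat \<Rightarrow> real"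
  assumes A_carrier: "A \<in> carrier_mat p n"
    and sel_less: "r < p \<Longrightarrow> sel r < n"
    and A_entry: "r < p \<Longrightarrow> c < n \<Longrightarrow> A $$ (r, c) = (if c = sel r then coef r else 0)"
begin

lemma dim_A [simp]: "dim_row A = p" "dim_col A = n"
  using A_carrier by auto

lemma supp_mult_cproj_ones:
  assumes "\<And>r. r < p \<Longrightarrow> coef r \<noteq> 0"
  shows "supp_vec (A * cproj n E *\<^sub>v ones_vec n) = {r. r < p \<and> sel r \<in> E}"
proof -
  have "(A * cproj n E *\<^sub>v ones_vec n) $ r = (if sel r \<in> E then coef r else 0)" if "r < p" for r
  proof -
    have "(A * cproj n E *\<^sub>v ones_vec n) $ r = (\<Sum>c = 0..<n. (A * cproj n E) $$ (r, c))"
      using that by (simp del: index_mult_mat(1) add: scalar_prod_def ones_vec_def)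
    also have "\<dots> = (\<Sum>c = 0..<n. if c = sel r then (if sel r \<in> E then coef r else 0) else 0)"
      using that by (intro sum.cong) (auto simp del: index_mult_mat(1) simp: index_mult_cproj A_entry)
    also have "\<dots> = (if sel r \<in> E then coef r else 0)"
      using that sel_less by simp
    finally show ?thesis .
  qed
  then show ?thesis using assms unfolding supp_vec_def by (auto split: if_splits)
qed

lemma cproj_mult_mult_cproj:
  assumes "{r. r < p \<and> sel r \<in> E} \<subseteq> F"
  shows "cproj p F * A * cproj n E = A * cproj n E"
  using assms
  by (intro eq_matI)
    (auto simp del: index_mult_mat(1) simp: index_cproj_mult index_mult_cproj A_entry sel_less)

lemma cproj_compl_mult_mult_cproj:
  assumes "{r. r < p \<and> sel r \<in> E} \<subseteq> F"
  shows "cproj p ({..<p} - F) * A * cproj n E = 0\<^sub>m p n"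
  using assms
  by (intro eq_matI)
    (auto simp del: index_mult_mat(1) simp: index_cproj_mult index_mult_cproj A_entry sel_less)

lemma cproj_mult_transpose_mult_cproj:
  assumes "{r. r < p \<and> sel r \<in> E} \<subseteq> F"
  shows "cproj n E * transpose_mat A * cproj p F = cproj n E * transpose_mat A"
  using assms
  by (intro eq_matI)
    (auto simp del: index_mult_mat(1) simp: index_cproj_mult index_mult_cproj A_entry sel_less)

lemma cproj_mult_mult_cproj_compl:
  "cproj p {r. r < p \<and> sel r \<in> E} * A * cproj n ({..<n} - E) = 0\<^sub>m p n"
  by (intro eq_matI)
    (auto simp del: index_mult_mat(1) simp: index_cproj_mult index_mult_cproj A_entry sel_less)

lemma cproj_compl_mult:
  "cproj p ({..<p} - {r. r < p \<and> sel r \<in> E}) * A = A * cproj n ({..<n} - E)"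
  by (intro eq_matI)
    (auto simp del: index_mult_mat(1) simp: index_cproj_mult index_mult_cproj A_entry sel_less)

lemma index_gram_cproj:
  assumes "i < n" "j < n"
  shows "(transpose_mat A * cproj p F * A) $$ (i, j)
    = (if i = j then (\<Sum>r | r < p \<and> r \<in> F \<and> sel r = i. (coef r)\<^sup>2) else 0)"
proof -
  have "(transpose_mat A * cproj p F * A) $$ (i, j) = row (transpose_mat A * cproj p F) i \<bullet> col A j"
    using assms by (intro index_mult_mat(1)) auto
  also have "\<dots> = (\<Sum>r = 0..<p. (if r \<in> F then A $$ (r, i) else 0) * A $$ (r, j))"
    using assms by (auto simp del: index_mult_mat(1) simp: scalar_prod_def index_mult_cproj intro!: sum.cong)
  also have "\<dots> = (\<Sum>r = 0..<p. if r \<in> F \<and> sel r = i \<and> sel r = j then (coef r)\<^sup>2 else 0)"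
    by (rule sum.cong) (simp_all add: A_entry assms power2_eq_square)
  also have "\<dots> = (\<Sum>r | r < p \<and> r \<in> F \<and> sel r = i \<and> sel r = j. (coef r)\<^sup>2)"
    by (rule sum.inter_filter[symmetric, THEN trans]) (auto intro: sum.cong)
  also have "\<dots> = (if i = j then (\<Sum>r | r < p \<and> r \<in> F \<and> sel r = i. (coef r)\<^sup>2) else 0)"
    by (auto intro!: sum.neutral)
  finally show ?thesis .
qed

lemma diagonal_gram_cproj: "diagonal_mat (transpose_mat A * cproj p F * A)"
  unfolding diagonal_mat_def by (simp del: index_mult_mat(1) add: index_gram_cproj)

end

lemma blk_off_Suc: "blk_off G (Suc t) = blk_off G t + card (G t)"
  by (simp add: blk_off_def)

lemma blk_off_mono: "s \<le> t \<Longrightarrow> blk_off G s \<le> blk_off G t"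
  unfolding blk_off_def by (rule sum_mono2) auto

lemma blkJ_unique:
  assumes "r \<in> blkJ G s" "r \<in> blkJ G t"
  shows "s = t"
proof (rule ccontr)
  assume "s \<noteq> t"
  then consider "Suc s \<le> t" | "Suc t \<le> s" by linarith
  then show False
    using assms blk_off_mono[of "Suc s" t G] blk_off_mono[of "Suc t" s G]
    by cases (auto simp: blkJ_def blk_off_Suc)
qed

lemma UN_blkJ: "(\<Union>t<N. blkJ G t) = {..<dimp N G}"
  by (induction N) (auto simp: dimp_def blkJ_def blk_off_Suc lessThan_Suc blk_off_def)

definition blk_of :: "(nat \<Rightarrow> nat set) \<Rightarrow> nat \<Rightarrow> nat \<Rightarrow> nat" where
  "blk_of G N r = (THE t. t < N \<and> r \<in> blkJ G t)"

definition blk_col :: "(nat \<Rightarrow> nat set) \<Rightarrow> nat \<Rightarrow> nat \<Rightarrow> nat" where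
  "blk_col G N r = sorted_list_of_set (G (blk_of G N r)) ! (r - blk_off G (blk_of G N r))"

lemma blk_of_eq: "t < N \<Longrightarrow> r \<in> blkJ G t \<Longrightarrow> blk_of G N r = t"
  unfolding blk_of_def by (rule the_equality) (auto dest: blkJ_unique)

lemma blk_of:
  assumes "r < dimp N G"
  shows "blk_of G N r < N" "r \<in> blkJ G (blk_of G N r)"
proof -
  obtain t where "t < N" "r \<in> blkJ G t" using assms UN_blkJ[of G N] by blast
  then show "blk_of G N r < N" "r \<in> blkJ G (blk_of G N r)" using blk_of_eq by simp_all
qed

lemma blk_col_in:
  assumes "r < dimp N G"
  shows "blk_col G N r \<in> G (blk_of G N r)"
proof -
  let ?t = "blk_of G N r"
  have k: "r - blk_off G ?t < card (G ?t)" using blk_of(2)[OF assms] by (auto simp: blkJ_def)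
  then have "finite (G ?t)" using card.infinite by fastforce
  with k show ?thesis unfolding blk_col_def by (metis nth_mem length_sorted_list_of_set set_sorted_list_of_set)
qed

lemma blk_off_add:
  assumes "t < N" "k < card (G t)"
  shows "blk_off G t + k < dimp N G" "blk_of G N (blk_off G t + k) = t"
    "blk_col G N (blk_off G t + k) = sorted_list_of_set (G t) ! k"
proof -
  have J: "blk_off G t + k \<in> blkJ G t" using assms(2) by (simp add: blkJ_def)
  then show "blk_off G t + k < dimp N G" using assms(1) UN_blkJ[of G N] by blast
  show "blk_of G N (blk_off G t + k) = t" using blk_of_eq[OF assms(1) J] .
  then show "blk_col G N (blk_off G t + k) = sorted_list_of_set (G t) ! k" by (simp add: blk_col_def)
qed

lemma blk_of_bij_betw:
  assumes "T \<subseteq> {..<N}" "\<And>t. t \<in> T \<Longrightarrow> finite (G t)"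
  shows "bij_betw (blk_of G N)
    {r. r < dimp N G \<and> blk_of G N r \<in> T \<and> blk_col G N r = i} {t \<in> T. i \<in> G t}"
    (is "bij_betw _ ?S ?T")
proof (rule bij_betw_imageI)
  show "inj_on (blk_of G N) ?S"
  proof (rule inj_onI)
    fix r s
    assume r: "r \<in> ?S"
      and s: "s \<in> ?S"
      and rs: "blk_of G N r = blk_of G N s"
    define t where "t = blk_of G N r"
    have "r \<in> blkJ G t" using r blk_of(2) unfolding t_def by blast
    moreover have "s \<in> blkJ G t" using s blk_of(2) unfolding t_def rs by blast
    ultimately have k: "r - blk_off G t < card (G t)" "s - blk_off G t < card (G t)"
      and off: "blk_off G t \<le> r" "blk_off G t \<le> s" by (auto simp: blkJ_def)
    have "finite (G t)" using r assms(2) t_def by blast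
    moreover have "sorted_list_of_set (G t) ! (r - blk_off G t) = sorted_list_of_set (G t) ! (s - blk_off G t)"
      using r s rs unfolding blk_col_def t_def by simp
    ultimately have "r - blk_off G t = s - blk_off G t" using k by (simp add: nth_eq_iff_index_eq)
    then show "r = s" using off by simp
  qed
  show "blk_of G N ` ?S = ?T"
  proof
    show "blk_of G N ` ?S \<subseteq> ?T"
      using blk_col_in by blast
  next
    show "?T \<subseteq> blk_of G N ` ?S"
    proof
      fix t assume t: "t \<in> ?T"
      then have "i \<in> set (sorted_list_of_set (G t))" using assms(2) by simp
      then obtain k where k: "k < card (G t)" "sorted_list_of_set (G t) ! k = i"
        by (metis in_set_conv_nth length_sorted_list_of_set)
      have "t < N" using t assms(1) by blast
      with k t show "t \<in> blk_of G N ` ?S"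
        using blk_off_add[of t N k G] by (intro image_eqI[of _ _ "blk_off G t + k"]) auto
    qed
  qed
qed

lemma Lmat_entry:
  assumes "r < dimp N G" "c < n"
  shows "Lmat n N G w $$ (r, c) = (if c = blk_col G N r then w (blk_of G N r) else 0)"
proof -
  have blk_iff: "r \<in> blkJ G t \<longleftrightarrow> t = blk_of G N r" if "t < N" for t
    using that blk_of[OF assms(1)] blk_of_eq by blast
  have "Lmat n N G w $$ (r, c) = (\<Sum>t<N. if r \<in> blkJ G t \<and> c = sorted_list_of_set (G t) ! (r - blk_off G t)
      then w t else 0)"
    using assms by (simp add: Lmat_def)
  also have "\<dots> = (\<Sum>t<N. if t = blk_of G N r then (if c = blk_col G N r then w t else 0) else 0)"
  proof (rule sum.cong)
    fix t assume "t \<in> {..<N}"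
    then show "(if r \<in> blkJ G t \<and> c = sorted_list_of_set (G t) ! (r - blk_off G t) then w t else 0)
      = (if t = blk_of G N r then (if c = blk_col G N r then w t else 0) else 0)"
      using blk_iff by (cases "t = blk_of G N r") (simp_all add: blk_col_def)
  qed simp
  also have "\<dots> = (if c = blk_col G N r then w (blk_of G N r) else 0)"
    using blk_of(1)[OF assms(1)] by simp
  finally show ?thesis .
qed

lemma mem_Ez_iff:
  assumes "r < dimp N G"
  shows "r \<in> Ez N G x \<longleftrightarrow> blk_of G N r \<in> actI N G x"
proof
  assume "r \<in> Ez N G x"
  then obtain t where t: "t \<in> actI N G x" "r \<in> blkJ G t" unfolding Ez_def by blast
  then have "t < N" by (simp add: actI_def)
  with t show "blk_of G N r \<in> actI N G x" using blk_of_eq by simp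
next
  assume "blk_of G N r \<in> actI N G x"
  then show "r \<in> Ez N G x" using blk_of(2)[OF assms] unfolding Ez_def by blast
qed

lemma blk_of_in_actI:
  assumes "r < dimp N G" "blk_col G N r \<in> Ex_set n N G x"
  shows "blk_of G N r \<in> actI N G x"
  using blk_of(1)[OF assms(1)] blk_col_in[OF assms(1)] assms(2) unfolding Ex_set_def by blast

lemma monomial_rows_Lmat:
  assumes "\<And>t. t < N \<Longrightarrow> G t \<subseteq> {..<n}"
  shows "monomial_rows (Lmat n N G w) (dimp N G) n (blk_col G N) (\<lambda>r. w (blk_of G N r))"
proof
  show "Lmat n N G w \<in> carrier_mat (dimp N G) n" by (simp add: Lmat_def)
next
  fix r assume r: "r < dimp N G"
  show "blk_col G N r < n" using assms blk_of(1)[OF r] blk_col_in[OF r] by blast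
  fix c assume "c < n"
  with r show "Lmat n N G w $$ (r, c) = (if c = blk_col G N r then w (blk_of G N r) else 0)"
    by (rule Lmat_entry)
qed

theorem lemmaA2:
  fixes n N :: nat and G :: "nat \<Rightarrow> nat set" and w :: "nat \<Rightarrow> real" and x :: "real vec"
  assumes G_ne: "\<And>t. t < N \<Longrightarrow> G t \<noteq> {}"
    and G_sub: "\<And>t. t < N \<Longrightarrow> G t \<subseteq> {..<n}"
    and G_cover: "(\<Union>t<N. G t) = {..<n}"
    and w_pos: "\<And>t. t < N \<Longrightarrow> w t > 0"
    and x_dim: "x \<in> carrier_vec n"
  defines "p \<equiv> dimp N G"
    and "L \<equiv> Lmat n N G w"
    and "I \<equiv> actI N G x"
    and "Px \<equiv> cproj n (Ex_set n N G x)"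
    and "Pxc \<equiv> cproj n ({..<n} - Ex_set n N G x)"
    and "Pz \<equiv> cproj (dimp N G) (Ez N G x)"
    and "Pzc \<equiv> cproj (dimp N G) ({..<dimp N G} - Ez N G x)"
    and "PL \<equiv> cproj (dimp N G) (EL n N G w x)"
    and "PLc \<equiv> cproj (dimp N G) ({..<dimp N G} - EL n N G w x)"
  shows "csub p (EL n N G w x) \<subseteq> csub p (Ez N G x)
    \<and> (PLc * L * Px = 0\<^sub>m p n \<and> PL * L * Pxc = 0\<^sub>m p n \<and> PLc * L = L * Pxc)
    \<and> ((\<forall>x' \<in> carrier_vec n. (Pz * L * Px) *\<^sub>v x' = (L * Px) *\<^sub>v x')
         \<and> Pzc * L * Px = 0\<^sub>m p n)
    \<and> (\<forall>u \<in> carrier_vec p. (Px * transpose_mat L * PL) *\<^sub>v u = (Px * transpose_mat L) *\<^sub>v u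
         \<and> (Px * transpose_mat L * Pz) *\<^sub>v u = (Px * transpose_mat L) *\<^sub>v u)
    \<and> (diagonal_mat (transpose_mat L * Pz * L)
         \<and> (\<forall>i<n. (transpose_mat L * Pz * L) $$ (i, i) = (\<Sum>t\<in>{t\<in>I. i \<in> G t}. (w t)\<^sup>2)))"
proof -
  interpret L: monomial_rows L p n "blk_col G N" "\<lambda>r. w (blk_of G N r)"
    unfolding L_def p_def using G_sub by (rule monomial_rows_Lmat)
  define Ex where "Ex = Ex_set n N G x"
  have "w (blk_of G N r) \<noteq> 0" if "r < p" for r
    using w_pos blk_of(1) that unfolding p_def by (metis less_irrefl)
  then have EL: "EL n N G w x = {r. r < p \<and> blk_col G N r \<in> Ex}"
    unfolding EL_def L_def[symmetric] Ex_def by (rule L.supp_mult_cproj_ones)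
  have EL_Ez: "{r. r < p \<and> blk_col G N r \<in> Ex} \<subseteq> Ez N G x"
    using blk_of_in_actI mem_Ez_iff unfolding p_def Ex_def by blast
  have gram_diag: "(transpose_mat L * Pz * L) $$ (i, i) = (\<Sum>t\<in>{t\<in>I. i \<in> G t}. (w t)\<^sup>2)"
    if "i < n" for i
  proof -
    have Ez: "{r. r < p \<and> r \<in> Ez N G x \<and> blk_col G N r = i}
        = {r. r < p \<and> blk_of G N r \<in> I \<and> blk_col G N r = i}"
      using mem_Ez_iff unfolding p_def I_def by blast
    have "bij_betw (blk_of G N) {r. r < p \<and> blk_of G N r \<in> I \<and> blk_col G N r = i} {t\<in>I. i \<in> G t}"
      unfolding p_def I_def
      by (rule blk_of_bij_betw) (auto simp: actI_def intro: finite_subset[OF G_sub])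
    then have "(\<Sum>r | r < p \<and> blk_of G N r \<in> I \<and> blk_col G N r = i. (w (blk_of G N r))\<^sup>2)
        = (\<Sum>t\<in>{t\<in>I. i \<in> G t}. (w t)\<^sup>2)"
      by (rule sum.reindex_bij_betw)
    then show ?thesis
      unfolding Pz_def p_def[symmetric] L.index_gram_cproj[OF that that] Ez by simp
  qed
  show ?thesis
    unfolding Px_def Pxc_def Pz_def Pzc_def PL_def PLc_def p_def[symmetric] EL Ex_def[symmetric]
    using EL_Ez gram_diag[unfolded Pz_def p_def[symmetric]]
      L.cproj_compl_mult_mult_cproj[OF order.refl] L.cproj_mult_mult_cproj_compl L.cproj_compl_mult
      L.cproj_mult_mult_cproj[OF EL_Ez] L.cproj_compl_mult_mult_cproj[OF EL_Ez]
      L.cproj_mult_transpose_mult_cproj[OF order.refl] L.cproj_mult_transpose_mult_cproj[OF EL_Ez]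
      L.diagonal_gram_cproj
    by (auto simp: csub_def)
qed

end
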